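(* Let $G$ be a 3-symmetric graph on 16 vertices. Then the clique number $\omega(G)$ satisfies $3\le \omega(G)\le 8$, and the maximum degree of $G$ is at least $8$.
   Context: All graphs are finite and simple. For a graph $G$ on $n$ vertices and a graph $F$ on $k$ vertices, the density $t(F,G)$ is the number of $k$-element subsets $S\subseteq V(G)$ whose induced subgraph is isomorphic to $F$, divided by $\binom{n}{k}$. A graph $G$ with at least 3 vertices is 3-symmetric if $t(K_3,G)=1/8$, $t(P_3,G)=3/8$, $t(K_2\cup K_1,G)=3/8$ and $t(\overline{K_3},G)=1/8$, where $K_3$ is the triangle, $P_3$ the path with 3 vertices and 2 edges, $K_2\cup K_1$ the 3-vertex graph with exactly one edge, and $\overline{K_3}$ the 3-vertex graph with no edges. *)

theory Defs
  imports Complex_Main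
begin

definition simple_graph :: "'a set \<Rightarrow> ('a \<Rightarrow> 'a \<Rightarrow> bool) \<Rightarrow> bool" where
  "simple_graph V E \<longleftrightarrow> finite V \<and> (\<forall>x\<in>V. \<forall>y\<in>V. E x y \<longleftrightarrow> E y x) \<and> (\<forall>x\<in>V. \<not> E x x)"

definition induced_iso :: "'a set \<Rightarrow> ('a \<Rightarrow> 'a \<Rightarrow> bool) \<Rightarrow> 'b set \<Rightarrow> ('b \<Rightarrow> 'b \<Rightarrow> bool) \<Rightarrow> bool" where
  "induced_iso S E W F \<longleftrightarrow>
     (\<exists>f. bij_betw f S W \<and> (\<forall>x\<in>S. \<forall>y\<in>S. E x y \<longleftrightarrow> F (f x) (f y)))"

definition density :: "'b set \<Rightarrow> ('b \<Rightarrow> 'b \<Rightarrow> bool) \<Rightarrow> 'a set \<Rightarrow> ('a \<Rightarrow> 'a \<Rightarrow> bool) \<Rightarrow> real" where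
  "density W F V E =
     real (card {S. S \<subseteq> V \<and> card S = card W \<and> induced_iso S E W F}) / real (card V choose card W)"

definition tri_V :: "nat set" where "tri_V = {0,1,2}"

definition K3_E :: "nat \<Rightarrow> nat \<Rightarrow> bool" where "K3_E x y \<longleftrightarrow> x \<noteq> y"
definition P3_E :: "nat \<Rightarrow> nat \<Rightarrow> bool" where
  "P3_E x y \<longleftrightarrow> {x,y} = {0,1} \<or> {x,y} = {1,2}"
definition K2K1_E :: "nat \<Rightarrow> nat \<Rightarrow> bool" where
  "K2K1_E x y \<longleftrightarrow> {x,y} = {0,1}"
definition empty3_E :: "nat \<Rightarrow> nat \<Rightarrow> bool" where "empty3_E x y \<longleftrightarrow> False"

definition three_symmetric :: "'a set \<Rightarrow> ('a \<Rightarrow> 'a \<Rightarrow> bool) \<Rightarrow> bool" where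
  "three_symmetric V E \<longleftrightarrow> card V \<ge> 3 \<and>
     density tri_V K3_E V E = 1/8 \<and> density tri_V P3_E V E = 3/8 \<and>
     density tri_V K2K1_E V E = 3/8 \<and> density tri_V empty3_E V E = 1/8"

definition is_clique :: "'a set \<Rightarrow> ('a \<Rightarrow> 'a \<Rightarrow> bool) \<Rightarrow> 'a set \<Rightarrow> bool" where
  "is_clique V E C \<longleftrightarrow> C \<subseteq> V \<and> (\<forall>x\<in>C. \<forall>y\<in>C. x \<noteq> y \<longrightarrow> E x y)"

definition clique_number :: "'a set \<Rightarrow> ('a \<Rightarrow> 'a \<Rightarrow> bool) \<Rightarrow> nat" where
  "clique_number V E = Max (card ` {C. is_clique V E C})"

definition degree :: "'a set \<Rightarrow> ('a \<Rightarrow> 'a \<Rightarrow> bool) \<Rightarrow> 'a \<Rightarrow> nat" where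
  "degree V E v = card {u\<in>V. E v u}"

definition max_degree :: "'a set \<Rightarrow> ('a \<Rightarrow> 'a \<Rightarrow> bool) \<Rightarrow> nat" where
  "max_degree V E = Max (degree V E ` V)"

end

theory Submission imports Defs begin

text \<open>Counting triples: a 3-symmetric graph on 16 vertices has \<open>560/8 = 70\<close> triangles.
A clique on 9 vertices would already contain \<open>9 choose 3 = 84\<close> of them, while any
triangle is a clique of size 3. Summing the number of edges over all triples counts
every edge \<open>16 - 2 = 14\<close> times, so \<open>14 e \<ge> 3\<cdot>70 + 2\<cdot>210 + 210 = 840\<close>, i.e. there are
at least 60 edges; hence the average degree is at least 7.5 and some degree is at least 8.\<close>

definition arcs :: "'a set \<Rightarrow> ('a \<Rightarrow> 'a \<Rightarrow> bool) \<Rightarrow> ('a \<times> 'a) set" where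
  "arcs V E = {(x, y). x \<in> V \<and> y \<in> V \<and> E x y}"

definition induced_copies :: "'b set \<Rightarrow> ('b \<Rightarrow> 'b \<Rightarrow> bool) \<Rightarrow> 'a set \<Rightarrow> ('a \<Rightarrow> 'a \<Rightarrow> bool) \<Rightarrow> 'a set set" where
  "induced_copies W F V E = {S. S \<subseteq> V \<and> card S = card W \<and> induced_iso S E W F}"

lemma finite_arcs: "finite V \<Longrightarrow> finite (arcs V E)"
  by (rule finite_subset[of _ "V \<times> V"]) (auto simp: arcs_def)

lemma finite_induced_copies: "finite V \<Longrightarrow> finite (induced_copies W F V E)"
  by (rule finite_subset[of _ "Pow V"]) (auto simp: induced_copies_def)

lemma card_induced_copies:
  assumes "card W \<le> card V"
  shows "real (card (induced_copies W F V E)) = density W F V E * real (card V choose card W)"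
  using assms by (simp add: density_def induced_copies_def)

lemma card_arcs_induced_iso:
  assumes "induced_iso S E W F"
  shows "card (arcs S E) = card (arcs W F)"
proof -
  obtain f where bij: "bij_betw f S W" and hom: "\<forall>x\<in>S. \<forall>y\<in>S. E x y \<longleftrightarrow> F (f x) (f y)"
    using assms unfolding induced_iso_def by blast
  have "map_prod f f ` arcs S E = arcs W F"
  proof
    show "map_prod f f ` arcs S E \<subseteq> arcs W F"
      using bij hom unfolding bij_betw_def arcs_def by auto
    show "arcs W F \<subseteq> map_prod f f ` arcs S E"
    proof clarify
      fix a b assume ab: "(a, b) \<in> arcs W F"
      then obtain x y where "x \<in> S" "y \<in> S" "a = f x" "b = f y"
        using bij unfolding bij_betw_def arcs_def by blast
      then show "(a, b) \<in> map_prod f f ` arcs S E"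
        using hom ab by (auto simp: arcs_def intro!: image_eqI[of _ _ "(x, y)"])
    qed
  qed
  moreover have "inj_on (map_prod f f) (arcs S E)"
    using bij unfolding bij_betw_def inj_on_def arcs_def by auto
  ultimately show ?thesis
    by (metis card_image)
qed

lemma card_arcs_K3: "card (arcs tri_V K3_E) = 6"
proof -
  have "arcs tri_V K3_E = {(0,1), (0,2), (1,0), (1,2), (2,0), (2,1)}"
    by (auto simp: arcs_def tri_V_def K3_E_def)
  then show ?thesis by simp
qed

lemma card_arcs_P3: "card (arcs tri_V P3_E) = 4"
proof -
  have "arcs tri_V P3_E = {(0,1), (1,0), (1,2), (2,1)}"
    by (auto simp: arcs_def tri_V_def P3_E_def doubleton_eq_iff)
  then show ?thesis by simp
qed

lemma card_arcs_K2K1: "card (arcs tri_V K2K1_E) = 2"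
proof -
  have "arcs tri_V K2K1_E = {(0,1), (1,0)}"
    by (auto simp: arcs_def tri_V_def K2K1_E_def doubleton_eq_iff)
  then show ?thesis by simp
qed

lemma card_tri_V [simp]: "card tri_V = 3"
  by (simp add: tri_V_def)

lemma induced_K3_is_clique:
  assumes "S \<in> induced_copies tri_V K3_E V E"
  shows "is_clique V E S"
proof -
  obtain f where "S \<subseteq> V" "bij_betw f S tri_V" "\<forall>x\<in>S. \<forall>y\<in>S. E x y \<longleftrightarrow> K3_E (f x) (f y)"
    using assms unfolding induced_copies_def induced_iso_def by blast
  then show ?thesis
    by (auto simp: is_clique_def K3_E_def bij_betw_def inj_on_def)
qed

lemma is_clique_subset: "is_clique V E C \<Longrightarrow> B \<subseteq> C \<Longrightarrow> is_clique V E B"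
  by (auto simp: is_clique_def)

lemma clique_is_induced_K3:
  assumes irrefl: "\<forall>x\<in>V. \<not> E x x" and clique: "is_clique V E S" and card: "card S = 3"
  shows "S \<in> induced_copies tri_V K3_E V E"
proof -
  have "finite S"
    using card by (simp add: card_ge_0_finite)
  then obtain f where bij: "bij_betw f S tri_V"
    using finite_same_card_bij[of S tri_V] card by (auto simp: tri_V_def)
  have "E x y \<longleftrightarrow> K3_E (f x) (f y)" if "x \<in> S" "y \<in> S" for x y
  proof -
    have "f x = f y \<longleftrightarrow> x = y"
      using that bij unfolding bij_betw_def inj_on_def by blast
    moreover have "x \<in> V"
      using that clique unfolding is_clique_def by blast
    ultimately show ?thesis
      using that clique irrefl unfolding is_clique_def K3_E_def by blast
  qed
  then have "induced_iso S E tri_V K3_E"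
    unfolding induced_iso_def using bij by blast
  then show ?thesis
    using clique card unfolding induced_copies_def is_clique_def by simp
qed

lemma choose_3_le_card_triangles:
  assumes "finite C" "\<forall>x\<in>V. \<not> E x x" "is_clique V E C" "finite V"
  shows "card C choose 3 \<le> card (induced_copies tri_V K3_E V E)"
proof -
  have "{B. B \<subseteq> C \<and> card B = 3} \<subseteq> induced_copies tri_V K3_E V E"
    using assms(2,3) clique_is_induced_K3 is_clique_subset by blast
  moreover have "finite (induced_copies tri_V K3_E V E)"
    using finite_induced_copies \<open>finite V\<close> .
  ultimately have "card {B. B \<subseteq> C \<and> card B = 3} \<le> card (induced_copies tri_V K3_E V E)"
    by (intro card_mono)
  then show ?thesis
    by (simp add: n_subsets[OF \<open>finite C\<close>])
qed

lemma card_arcs_induced_copy: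
  "S \<in> induced_copies W F V E \<Longrightarrow> card (arcs S E) = card (arcs W F)"
  unfolding induced_copies_def by (auto intro: card_arcs_induced_iso)

lemma card_3_subsets_containing_pair:
  assumes "finite V" "x \<in> V" "y \<in> V" "x \<noteq> y"
  shows "card {S. S \<subseteq> V \<and> card S = 3 \<and> x \<in> S \<and> y \<in> S} = card V - 2"
proof -
  have "{S. S \<subseteq> V \<and> card S = 3 \<and> x \<in> S \<and> y \<in> S} = (\<lambda>z. {x, y, z}) ` (V - {x, y})"
  proof
    show "(\<lambda>z. {x, y, z}) ` (V - {x, y}) \<subseteq> {S. S \<subseteq> V \<and> card S = 3 \<and> x \<in> S \<and> y \<in> S}"
      using assms by auto
    show "{S. S \<subseteq> V \<and> card S = 3 \<and> x \<in> S \<and> y \<in> S} \<subseteq> (\<lambda>z. {x, y, z}) ` (V - {x, y})"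
    proof clarify
      fix S assume S: "S \<subseteq> V" "card S = 3" "x \<in> S" "y \<in> S"
      have "card (S - {x, y}) = 1"
        using S assms by (simp add: card_Diff_subset card_ge_0_finite)
      then obtain z where z: "S - {x, y} = {z}"
        by (auto simp: card_Suc_eq)
      then have "S = {x, y, z}" "z \<in> V - {x, y}"
        using S by blast+
      then show "S \<in> (\<lambda>z. {x, y, z}) ` (V - {x, y})"
        by blast
    qed
  qed
  moreover have "inj_on (\<lambda>z. {x, y, z}) (V - {x, y})"
    unfolding inj_on_def by auto
  ultimately show ?thesis
    using assms by (simp add: card_image card_Diff_subset)
qed

text \<open>Double counting of pairs (arc, triple containing it): every arc lies in \<open>card V - 2\<close> triples.\<close>

lemma sum_card_arcs_3_subsets:
  assumes fin: "finite V" and irrefl: "\<forall>x\<in>V. \<not> E x x"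
  shows "(\<Sum>S | S \<subseteq> V \<and> card S = 3. card (arcs S E)) = (card V - 2) * card (arcs V E)"
proof -
  let ?T = "{S. S \<subseteq> V \<and> card S = 3}"
  let ?inside = "\<lambda>S p. of_bool (fst p \<in> S \<and> snd p \<in> S) :: nat"
  have "finite ?T"
    using fin by simp
  have arcs_sub: "card (arcs S E) = (\<Sum>p\<in>arcs V E. ?inside S p)" if "S \<subseteq> V" for S
  proof -
    have "arcs V E \<inter> {p. fst p \<in> S \<and> snd p \<in> S} = arcs S E"
      using that unfolding arcs_def by auto
    then show ?thesis
      using finite_arcs[OF fin] by simp
  qed
  have triples_through: "(\<Sum>S\<in>?T. ?inside S p) = card V - 2" if "p \<in> arcs V E" for p
  proof -
    obtain x y where p: "p = (x, y)"
      by (cases p)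
    then have "x \<in> V" "y \<in> V" "E x y"
      using that unfolding arcs_def by auto
    then have "x \<noteq> y"
      using irrefl by auto
    have "?T \<inter> {S. fst p \<in> S \<and> snd p \<in> S} = {S. S \<subseteq> V \<and> card S = 3 \<and> x \<in> S \<and> y \<in> S}"
      unfolding p by auto
    then show ?thesis
      using \<open>finite ?T\<close> card_3_subsets_containing_pair[OF fin \<open>x \<in> V\<close> \<open>y \<in> V\<close> \<open>x \<noteq> y\<close>] by simp
  qed
  have "(\<Sum>S\<in>?T. card (arcs S E)) = (\<Sum>S\<in>?T. \<Sum>p\<in>arcs V E. ?inside S p)"
    using arcs_sub by (intro sum.cong) auto
  also have "\<dots> = (\<Sum>p\<in>arcs V E. \<Sum>S\<in>?T. ?inside S p)"
    by (rule sum.swap)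
  also have "\<dots> = (card V - 2) * card (arcs V E)"
    using triples_through by simp
  finally show ?thesis .
qed

lemma weighted_triple_count_le:
  assumes fin: "finite V" and irrefl: "\<forall>x\<in>V. \<not> E x x"
  shows "6 * card (induced_copies tri_V K3_E V E) + 4 * card (induced_copies tri_V P3_E V E)
           + 2 * card (induced_copies tri_V K2K1_E V E) \<le> (card V - 2) * card (arcs V E)"
proof -
  let ?A = "induced_copies tri_V K3_E V E"
  let ?B = "induced_copies tri_V P3_E V E"
  let ?C = "induced_copies tri_V K2K1_E V E"
  have arcs_A: "card (arcs S E) = 6" if "S \<in> ?A" for S
    using card_arcs_induced_copy[OF that] card_arcs_K3 by simp
  have arcs_B: "card (arcs S E) = 4" if "S \<in> ?B" for S
    using card_arcs_induced_copy[OF that] card_arcs_P3 by simp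
  have arcs_C: "card (arcs S E) = 2" if "S \<in> ?C" for S
    using card_arcs_induced_copy[OF that] card_arcs_K2K1 by simp
  have fins: "finite ?A" "finite ?B" "finite ?C"
    using fin by (simp_all add: finite_induced_copies)
  have "?A \<inter> ?B = {}" "(?A \<union> ?B) \<inter> ?C = {}"
    using arcs_A arcs_B arcs_C by fastforce+
  then have "(\<Sum>S\<in>?A \<union> ?B \<union> ?C. card (arcs S E))
               = (\<Sum>S\<in>?A. card (arcs S E)) + (\<Sum>S\<in>?B. card (arcs S E)) + (\<Sum>S\<in>?C. card (arcs S E))"
    using fins by (simp add: sum.union_disjoint)
  also have "\<dots> = 6 * card ?A + 4 * card ?B + 2 * card ?C"
    using arcs_A arcs_B arcs_C by simp
  finally have "6 * card ?A + 4 * card ?B + 2 * card ?C = (\<Sum>S\<in>?A \<union> ?B \<union> ?C. card (arcs S E))" ..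
  also have "\<dots> \<le> (\<Sum>S | S \<subseteq> V \<and> card S = 3. card (arcs S E))"
    using fin by (intro sum_mono2) (auto simp: induced_copies_def)
  also have "\<dots> = (card V - 2) * card (arcs V E)"
    by (rule sum_card_arcs_3_subsets[of V E, OF fin irrefl])
  finally show ?thesis .
qed

lemma card_arcs_eq_sum_degree:
  "finite V \<Longrightarrow> card (arcs V E) = (\<Sum>x\<in>V. degree V E x)"
proof -
  have "arcs V E = Sigma V (\<lambda>x. {u\<in>V. E x u})"
    unfolding arcs_def by auto
  then show "finite V \<Longrightarrow> ?thesis"
    by (simp add: degree_def)
qed

lemma card_arcs_le_max_degree:
  assumes "finite V"
  shows "card (arcs V E) \<le> card V * max_degree V E"
proof -
  have "(\<Sum>x\<in>V. degree V E x) \<le> of_nat (card V) * max_degree V E"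
    using assms by (intro sum_bounded_above) (simp add: max_degree_def)
  then show ?thesis
    using card_arcs_eq_sum_degree[OF assms] by simp
qed

lemma finite_clique_sizes:
  "finite V \<Longrightarrow> finite (card ` {C. is_clique V E C})"
  by (rule finite_subset[of _ "{0..card V}"]) (auto simp: is_clique_def card_mono)

lemma card_le_clique_number:
  "finite V \<Longrightarrow> is_clique V E C \<Longrightarrow> card C \<le> clique_number V E"
  unfolding clique_number_def by (auto intro: Max_ge finite_clique_sizes)

lemma clique_number_le:
  assumes "finite V" "\<And>C. is_clique V E C \<Longrightarrow> card C \<le> k"
  shows "clique_number V E \<le> k"
proof -
  have "is_clique V E {}"
    by (simp add: is_clique_def)
  then show ?thesis
    unfolding clique_number_def using assms finite_clique_sizes[OF assms(1)]
    by (subst Max_le_iff) auto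
qed

theorem mainTheorem19:
  fixes V :: "'a set" and E :: "'a \<Rightarrow> 'a \<Rightarrow> bool"
  assumes "simple_graph V E"
    and "card V = 16"
    and "three_symmetric V E"
  shows "3 \<le> clique_number V E \<and> clique_number V E \<le> 8 \<and> max_degree V E \<ge> 8"
proof -
  have fin: "finite V" and irrefl: "\<forall>x\<in>V. \<not> E x x"
    using assms(1) unfolding simple_graph_def by auto
  have "(16::nat) choose 3 = 560"
    by (simp add: numeral_eq_Suc)
  then have copies: "real (card (induced_copies tri_V F V E)) = density tri_V F V E * 560" for F
    using card_induced_copies[of tri_V V F E] assms(2) by simp
  have triangles: "card (induced_copies tri_V K3_E V E) = 70"
    using copies[of K3_E] assms(3) by (simp add: three_symmetric_def)
  have "card (induced_copies tri_V P3_E V E) = 210" "card (induced_copies tri_V K2K1_E V E) = 210"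
    using copies[of P3_E] copies[of K2K1_E] assms(3) by (simp_all add: three_symmetric_def)
  with triangles have "1680 \<le> 14 * card (arcs V E)"
    using weighted_triple_count_le[of V E, OF fin irrefl] assms(2) by simp
  moreover have "card (arcs V E) \<le> 16 * max_degree V E"
    using card_arcs_le_max_degree[OF fin, of E] assms(2) by simp
  ultimately have max_degree: "8 \<le> max_degree V E"
    by linarith
  obtain S where S: "S \<in> induced_copies tri_V K3_E V E"
    using triangles by fastforce
  have "3 \<le> clique_number V E"
    using card_le_clique_number[OF fin induced_K3_is_clique[OF S]] S
    by (simp add: induced_copies_def)
  moreover have "card C \<le> 8" if C: "is_clique V E C" for C
  proof (rule ccontr)
    assume "\<not> card C \<le> 8"
    then have "9 \<le> card C"
      by simp
    then obtain D where "D \<subseteq> C" "card D = 9" "finite D"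
      by (rule obtain_subset_with_card_n)
    then have "card D choose 3 \<le> 70"
      using choose_3_le_card_triangles[of D V E] irrefl is_clique_subset[OF C] fin triangles
      by simp
    then show False
      using \<open>card D = 9\<close> by (simp add: numeral_eq_Suc)
  qed
  ultimately show ?thesis
    using clique_number_le[OF fin] max_degree by blast
qed

end
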